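(* Let $f:X\to X$ be a homeomorphism of a compact metric space $(X,d)$. If $f$ has a specification point, then $f$ has the specification property.
   Context: $f$ has the specification property if for every $\varepsilon>0$ there is $K>0$ such that for any finite sequence of points $x_0,\dots,x_n\in X$ and integers $a_0\le b_0,\dots,a_n\le b_n$ with $a_{i+1}-b_i\ge K$ for every $i$, there is $y\in X$ with $d(f^j(y),f^j(x_i))<\varepsilon$ for $a_i\le j\le b_i$, $i=0,\dots,n$. A point $x\in X$ is a specification point of $f$ if for every $\varepsilon>0$ there is $K>0$ such that for any finite sequence of points $x=x_0,x_1,\dots,x_n\in X$ (with first point equal to $x$) and integers $a_0\le b_0,\dots,a_n\le b_n$ with $a_{i+1}-b_i\ge K$ for every $i$, there is $y\in X$ with $d(f^j(y),f^j(x_i))<\varepsilon$ for $a_i\le j\le b_i$, $i=0,\dots,n$. *)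

theory Defs
  imports "HOL-Analysis.Analysis"
begin

definition spec_condition ::
  "'a::metric_space set \<Rightarrow> ('a \<Rightarrow> 'a) \<Rightarrow> real \<Rightarrow> nat \<Rightarrow> nat \<Rightarrow> (nat \<Rightarrow> 'a) \<Rightarrow> (nat \<Rightarrow> nat) \<Rightarrow> (nat \<Rightarrow> nat) \<Rightarrow> bool"
  where
  "spec_condition X f \<epsilon> K n x a b \<longleftrightarrow>
     ((\<forall>i\<le>n. x i \<in> X \<and> a i \<le> b i) \<and> (\<forall>i<n. a (Suc i) \<ge> b i + K)) \<longrightarrow>
     (\<exists>y\<in>X. \<forall>i\<le>n. \<forall>j. a i \<le> j \<and> j \<le> b i \<longrightarrow> dist ((f ^^ j) y) ((f ^^ j) (x i)) < \<epsilon>)"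

definition has_specification_property :: "'a::metric_space set \<Rightarrow> ('a \<Rightarrow> 'a) \<Rightarrow> bool" where
  "has_specification_property X f \<longleftrightarrow>
     (\<forall>\<epsilon>>0. \<exists>K>0. \<forall>n x a b. spec_condition X f \<epsilon> K n x a b)"

definition specification_point :: "'a::metric_space set \<Rightarrow> ('a \<Rightarrow> 'a) \<Rightarrow> 'a \<Rightarrow> bool" where
  "specification_point X f p \<longleftrightarrow> p \<in> X \<and>
     (\<forall>\<epsilon>>0. \<exists>K>0. \<forall>n x a b. x 0 = p \<longrightarrow> spec_condition X f \<epsilon> K n x a b)"

end

theory Submission
  imports Defs
begin

text \<open>Given orbit segments of \<open>x\<^sub>0, \<dots>, x\<^sub>n\<close> over windows \<open>[a\<^sub>i, b\<^sub>i]\<close> with gaps at least \<open>K\<close>,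
  pull every \<open>x\<^sub>i\<close> back \<open>K\<close> steps (possible since \<open>f\<close> maps \<open>X\<close> onto itself), shift
  every window by \<open>K\<close>, and put the specification point \<open>p\<close> in front with the window \<open>[0, 0]\<close>.
  The gap after \<open>p\<close> is again \<open>K\<close>, so \<open>p\<close> being a specification point yields a point \<open>y\<close>
  shadowing this longer sequence; then \<open>f\<^sup>K y\<close> shadows the original one.\<close>

lemma funpow_image_eq:
  assumes "f ` X = X"
  shows "(f ^^ k) ` X = X"
proof (induction k)
  case (Suc k)
  have "(f ^^ Suc k) ` X = f ` (f ^^ k) ` X"
    by (simp add: image_image)
  with Suc assms show ?case
    by simp
qed simp

lemma spec_condition_if_all_starting_at:
  assumes onto: "f ` X = X" and "p \<in> X"
    and from_p: "\<And>n x a b. x 0 = p \<Longrightarrow> spec_condition X f \<epsilon> K n x a b"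
  shows "spec_condition X f \<epsilon> K n x a b"
  unfolding spec_condition_def
proof (intro impI)
  assume hyps: "(\<forall>i\<le>n. x i \<in> X \<and> a i \<le> b i) \<and> (\<forall>i<n. b i + K \<le> a (Suc i))"
  have onto_K: "(f ^^ K) ` X = X"
    using onto by (rule funpow_image_eq)
  define z where "z i = inv_into X (f ^^ K) (x i)" for i
  have z: "z i \<in> X \<and> (f ^^ K) (z i) = x i" if "i \<le> n" for i
  proof -
    have "x i \<in> (f ^^ K) ` X"
      using hyps that onto_K by simp
    then show ?thesis
      unfolding z_def by (simp add: inv_into_into f_inv_into_f)
  qed
  define x' where "x' i = (if i = 0 then p else z (i - 1))" for i
  define a' where "a' i = (if i = 0 then 0 else a (i - 1) + K)" for i
  define b' where "b' i = (if i = 0 then 0 else b (i - 1) + K)" for i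
  have "(\<forall>i\<le>Suc n. x' i \<in> X \<and> a' i \<le> b' i) \<and> (\<forall>i<Suc n. b' i + K \<le> a' (Suc i))"
  proof (intro conjI allI impI)
    fix i assume "i \<le> Suc n"
    then show "x' i \<in> X" "a' i \<le> b' i"
      using hyps z [of "i - 1"] \<open>p \<in> X\<close> by (simp_all add: x'_def a'_def b'_def)
  next
    fix i assume "i < Suc n"
    then show "b' i + K \<le> a' (Suc i)"
      using hyps by (cases i) (auto simp: a'_def b'_def)
  qed
  moreover have "spec_condition X f \<epsilon> K (Suc n) x' a' b'"
    using from_p by (simp add: x'_def)
  ultimately obtain y where "y \<in> X" and y: "\<forall>i\<le>Suc n. \<forall>j. a' i \<le> j \<and> j \<le> b' i \<longrightarrow>
      dist ((f ^^ j) y) ((f ^^ j) (x' i)) < \<epsilon>"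
    unfolding spec_condition_def by (meson rev_mp)
  show "\<exists>y\<in>X. \<forall>i\<le>n. \<forall>j. a i \<le> j \<and> j \<le> b i \<longrightarrow> dist ((f ^^ j) y) ((f ^^ j) (x i)) < \<epsilon>"
  proof (intro bexI allI impI)
    show "(f ^^ K) y \<in> X"
      using \<open>y \<in> X\<close> onto_K by blast
    fix i j assume "i \<le> n" and "a i \<le> j \<and> j \<le> b i"
    then have "dist ((f ^^ (j + K)) y) ((f ^^ (j + K)) (x' (Suc i))) < \<epsilon>"
      using y [rule_format, of "Suc i" "j + K"] by (simp add: a'_def b'_def)
    then show "dist ((f ^^ j) ((f ^^ K) y)) ((f ^^ j) (x i)) < \<epsilon>"
      using z [OF \<open>i \<le> n\<close>] by (simp add: x'_def funpow_add)
  qed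
qed

lemma has_specification_property_if_specification_point:
  assumes onto: "f ` X = X" and "specification_point X f p"
  shows "has_specification_property X f"
  unfolding has_specification_property_def
proof (intro allI impI)
  fix \<epsilon> :: real assume "\<epsilon> > 0"
  with assms(2) obtain K where "K > 0"
    and from_p: "\<And>n x a b. x 0 = p \<Longrightarrow> spec_condition X f \<epsilon> K n x a b"
    unfolding specification_point_def by blast
  have "p \<in> X"
    using assms(2) unfolding specification_point_def by blast
  have "spec_condition X f \<epsilon> K n x a b" for n x a b
    using onto \<open>p \<in> X\<close> from_p by (rule spec_condition_if_all_starting_at)
  with \<open>K > 0\<close> show "\<exists>K>0. \<forall>n x a b. spec_condition X f \<epsilon> K n x a b"
    by blast
qed

theorem proposition7p1:
  fixes X :: "'a::metric_space set" and f :: "'a \<Rightarrow> 'a"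
  assumes "compact X"
    and "\<exists>g. homeomorphism X X f g"
    and "\<exists>p. specification_point X f p"
  shows "has_specification_property X f"
proof -
  have "f ` X = X"
    using assms(2) unfolding homeomorphism_def by blast
  then show ?thesis
    using assms(3) has_specification_property_if_specification_point by blast
qed

end
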